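(* Let $I,J\subset\mathbb{R}$ be intervals, $f:I\times J\to I$, $f_\lambda(x)=f(x,\lambda)$, $\lambda_0\in J$, $f_0=f_{\lambda_0}$. Assume: (H1) $f$ is a $C^1$ family of $C^2$ interval maps; (H2) $f_0$ is not constant on any interval; (H3) $f_0$ has at most one of: (a) a non-hyperbolic fixed point or periodic orbit, which as $\lambda$ varies is a generic codimension-one period-doubling or saddle-node bifurcation; (b) one critical point which constitutes a tangency between stable and unstable manifolds of fixed points or periodic orbits, generic in that as $\lambda$ varies through $\lambda_0$ the critical point moves from one side of the periodic point to the other; (H4) for each $\lambda$, $x_\lambda$ is a repelling fixed point of $f_\lambda$, $x_0:=x_{\lambda_0}$, and $y$ is a homoclinic point to $x_0$ for $f_0$; (H5) the homoclinic orbit containing $y$ at $\lambda=\lambda_0$ contains only one critical point of $f_0$. If $f_0'(x_0)<0$, then $(y,\lambda_0)$ is not a chain explosion point.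
   Context: For a map $g$, an $\epsilon$-chain from $x$ to $y$ is a finite sequence $z_0=x,\dots,z_N=y$ with $|g(z_{n-1})-z_n|<\epsilon$; $x$ is chain recurrent if for every $\epsilon>0$ there is an $\epsilon$-chain from $x$ to itself with $N>0$. $(x,\lambda_0)$ is a chain explosion point if $x$ is chain recurrent for $f_{\lambda_0}$ but some neighborhood of $x$ contains no chain recurrent point of $f_\lambda$ for all $\lambda$ on one side of $\lambda_0$. For a repelling fixed point $x_0$ of $f_0$, a point $y$ in the unstable manifold of $x_0$ with $f_0^K(y)=x_0$ for some integer $K>0$ is a homoclinic point to $x_0$. A homoclinic orbit through $y$ is a sequence $(z_{-k})_{k\ge0}$ with $z_0=x_0$, $z_{-K}=y$ for some $K$, $f_0(z_{-k})=z_{-k+1}$ for all $k\ge1$, and $z_{-k}\to x_0$ as $k\to\infty$. *)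

theory Defs
  imports "HOL-Analysis.Analysis"
begin

definition C1_family_of_C2_maps :: "real set \<Rightarrow> real set \<Rightarrow> (real \<Rightarrow> real \<Rightarrow> real) \<Rightarrow> bool" where
  "C1_family_of_C2_maps I J f \<longleftrightarrow>
     (\<exists>fx fl.
        continuous_on (I \<times> J) (\<lambda>(x, l). fx x l) \<and>
        continuous_on (I \<times> J) (\<lambda>(x, l). fl x l) \<and>
        (\<forall>x\<in>I. \<forall>l\<in>J. ((\<lambda>(u, v). f u v) has_derivative (\<lambda>(h, k). fx x l * h + fl x l * k))
                           (at (x, l) within I \<times> J))) \<and>
     (\<forall>l\<in>J. \<exists>g1 g2.
        (\<forall>x\<in>I. ((\<lambda>u. f u l) has_real_derivative g1 x) (at x within I) \<and>
                 (g1 has_real_derivative g2 x) (at x within I)) \<and>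
        continuous_on I g2)"

definition nowhere_constant :: "real set \<Rightarrow> (real \<Rightarrow> real) \<Rightarrow> bool" where
  "nowhere_constant I g \<longleftrightarrow>
     (\<forall>a b. a < b \<and> {a..b} \<subseteq> I \<longrightarrow> \<not> (\<exists>c. \<forall>x\<in>{a..b}. g x = c))"

definition periodic_pt :: "(real \<Rightarrow> real) \<Rightarrow> nat \<Rightarrow> real \<Rightarrow> bool" where
  "periodic_pt g n p \<longleftrightarrow> 0 < n \<and> (g ^^ n) p = p \<and> (\<forall>k. 0 < k \<and> k < n \<longrightarrow> (g ^^ k) p \<noteq> p)"

definition orbit_of :: "(real \<Rightarrow> real) \<Rightarrow> nat \<Rightarrow> real \<Rightarrow> real set" where
  "orbit_of g n p = {(g ^^ k) p | k. k < n}"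

definition nonhyperbolic_periodic :: "real set \<Rightarrow> (real \<Rightarrow> real) \<Rightarrow> nat \<Rightarrow> real \<Rightarrow> bool" where
  "nonhyperbolic_periodic I g n p \<longleftrightarrow> p \<in> I \<and> periodic_pt g n p \<and>
     (\<exists>d. ((g ^^ n) has_real_derivative d) (at p within I) \<and> \<bar>d\<bar> = 1)"

definition repelling_periodic :: "real set \<Rightarrow> (real \<Rightarrow> real) \<Rightarrow> nat \<Rightarrow> real \<Rightarrow> bool" where
  "repelling_periodic I g n p \<longleftrightarrow> p \<in> I \<and> periodic_pt g n p \<and>
     (\<exists>d. ((g ^^ n) has_real_derivative d) (at p within I) \<and> \<bar>d\<bar> > 1)"

definition repelling_fixed :: "real set \<Rightarrow> (real \<Rightarrow> real) \<Rightarrow> real \<Rightarrow> bool" where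
  "repelling_fixed I g x \<longleftrightarrow> x \<in> I \<and> g x = x \<and>
     (\<exists>d. (g has_real_derivative d) (at x within I) \<and> \<bar>d\<bar> > 1)"

definition critical_point :: "real set \<Rightarrow> (real \<Rightarrow> real) \<Rightarrow> real \<Rightarrow> bool" where
  "critical_point I g c \<longleftrightarrow> c \<in> I \<and> (g has_real_derivative 0) (at c within I)"

definition unstable_manifold_fixed :: "real set \<Rightarrow> (real \<Rightarrow> real) \<Rightarrow> real \<Rightarrow> real set" where
  "unstable_manifold_fixed I g x0 =
     {y \<in> I. \<exists>w. w 0 = y \<and> (\<forall>k. w k \<in> I \<and> g (w (Suc k)) = w k) \<and> w \<longlonglongrightarrow> x0}"

text \<open>Unstable manifold of the periodic orbit of q (period n): points having a backward
  orbit in I accumulating (along one residue class mod n) on a point of the orbit.\<close>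
definition unstable_set_periodic :: "real set \<Rightarrow> (real \<Rightarrow> real) \<Rightarrow> nat \<Rightarrow> real \<Rightarrow> real set" where
  "unstable_set_periodic I g n q =
     {y \<in> I. \<exists>w. w 0 = y \<and> (\<forall>k. w k \<in> I \<and> g (w (Suc k)) = w k) \<and>
               (\<exists>i. (\<lambda>k. w (n * k + i)) \<longlonglongrightarrow> q)}"

definition homoclinic_point :: "real set \<Rightarrow> (real \<Rightarrow> real) \<Rightarrow> real \<Rightarrow> real \<Rightarrow> bool" where
  "homoclinic_point I g x0 y \<longleftrightarrow> repelling_fixed I g x0 \<and>
     y \<in> unstable_manifold_fixed I g x0 \<and> (\<exists>K>0. (g ^^ K) y = x0)"

text \<open>Homoclinic orbit through y: z k stands for z_{-k}.\<close>
definition homoclinic_orbit :: "real set \<Rightarrow> (real \<Rightarrow> real) \<Rightarrow> real \<Rightarrow> real \<Rightarrow> (nat \<Rightarrow> real) \<Rightarrow> bool" where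
  "homoclinic_orbit I g x0 y z \<longleftrightarrow>
     z 0 = x0 \<and> (\<exists>K. z K = y) \<and> (\<forall>k. z k \<in> I) \<and>
     (\<forall>k. g (z (Suc k)) = z k) \<and> z \<longlonglongrightarrow> x0"

text \<open>Critical point constituting a tangency between the unstable manifold of a (repelling)
  periodic orbit and the stable manifold (i.e. preimages) of a repelling periodic orbit.\<close>
definition tangency_critical :: "real set \<Rightarrow> (real \<Rightarrow> real) \<Rightarrow> real \<Rightarrow> bool" where
  "tangency_critical I g c \<longleftrightarrow> critical_point I g c \<and>
     (\<exists>n q. repelling_periodic I g n q \<and> c \<in> unstable_set_periodic I g n q) \<and>
     (\<exists>n p m. repelling_periodic I g n p \<and> (g ^^ m) c = p)"

definition generic_saddle_node ::
  "real set \<Rightarrow> real set \<Rightarrow> (real \<Rightarrow> real \<Rightarrow> real) \<Rightarrow> real \<Rightarrow> nat \<Rightarrow> real \<Rightarrow> bool" where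
  "generic_saddle_node I J f l0 n p \<longleftrightarrow>
     (\<exists>g1 d2 dl.
        (\<forall>x\<in>I. (((\<lambda>u. f u l0) ^^ n) has_real_derivative g1 x) (at x within I)) \<and>
        g1 p = 1 \<and> (g1 has_real_derivative d2) (at p within I) \<and> d2 \<noteq> 0 \<and>
        ((\<lambda>l. ((\<lambda>u. f u l) ^^ n) p) has_real_derivative dl) (at l0 within J) \<and> dl \<noteq> 0)"

definition generic_period_doubling ::
  "real set \<Rightarrow> real set \<Rightarrow> (real \<Rightarrow> real \<Rightarrow> real) \<Rightarrow> real \<Rightarrow> nat \<Rightarrow> real \<Rightarrow> bool" where
  "generic_period_doubling I J f l0 n p \<longleftrightarrow>
     (((\<lambda>u. f u l0) ^^ n) has_real_derivative (-1)) (at p within I) \<and>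
     (\<exists>\<delta>>0. \<exists>pp mu s.
        continuous_on ({l0 - \<delta><..<l0 + \<delta>} \<inter> J) pp \<and> pp l0 = p \<and> s \<in> {-1, 1::real} \<and>
        (\<forall>l\<in>{l0 - \<delta><..<l0 + \<delta>} \<inter> J.
            pp l \<in> I \<and> ((\<lambda>u. f u l) ^^ n) (pp l) = pp l \<and>
            (((\<lambda>u. f u l) ^^ n) has_real_derivative mu l) (at (pp l) within I) \<and>
            (l < l0 \<longrightarrow> s * (mu l + 1) > 0) \<and> (l0 < l \<longrightarrow> s * (mu l + 1) < 0))) \<and>
     (\<exists>g1 g2 d3.
        (\<forall>x\<in>I. (((\<lambda>u. f u l0) ^^ (2 * n)) has_real_derivative g1 x) (at x within I) \<and>
                 (g1 has_real_derivative g2 x) (at x within I)) \<and>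
        (g2 has_real_derivative d3) (at p within I) \<and> d3 \<noteq> 0)"

text \<open>Generic tangency: as lambda passes lambda0 the continued critical point (more precisely
  its image f_lambda^m(c_lambda), which equals p at lambda0) moves from one side of the
  continued periodic point p_lambda to the other.\<close>
definition generic_tangency ::
  "real set \<Rightarrow> real set \<Rightarrow> (real \<Rightarrow> real \<Rightarrow> real) \<Rightarrow> real \<Rightarrow> real \<Rightarrow> bool" where
  "generic_tangency I J f l0 c \<longleftrightarrow>
     (\<exists>n p m. repelling_periodic I (\<lambda>u. f u l0) n p \<and> ((\<lambda>u. f u l0) ^^ m) c = p \<and>
       (\<exists>\<delta>>0. \<exists>cc pp s.
          continuous_on ({l0 - \<delta><..<l0 + \<delta>} \<inter> J) cc \<and>
          continuous_on ({l0 - \<delta><..<l0 + \<delta>} \<inter> J) pp \<and>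
          cc l0 = c \<and> pp l0 = p \<and> s \<in> {-1, 1::real} \<and>
          (\<forall>l\<in>{l0 - \<delta><..<l0 + \<delta>} \<inter> J.
              critical_point I (\<lambda>u. f u l) (cc l) \<and>
              pp l \<in> I \<and> ((\<lambda>u. f u l) ^^ n) (pp l) = pp l \<and>
              (l < l0 \<longrightarrow> s * (((\<lambda>u. f u l) ^^ m) (cc l) - pp l) > 0) \<and>
              (l0 < l \<longrightarrow> s * (((\<lambda>u. f u l) ^^ m) (cc l) - pp l) < 0))))"

definition H3_condition :: "real set \<Rightarrow> real set \<Rightarrow> (real \<Rightarrow> real \<Rightarrow> real) \<Rightarrow> real \<Rightarrow> bool" where
  "H3_condition I J f l0 \<longleftrightarrow>
     (let g = (\<lambda>u. f u l0) in
       ((\<forall>n p. \<not> nonhyperbolic_periodic I g n p) \<or> (\<forall>c. \<not> tangency_critical I g c)) \<and>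
       (\<forall>n1 p1 n2 p2. nonhyperbolic_periodic I g n1 p1 \<and> nonhyperbolic_periodic I g n2 p2
            \<longrightarrow> orbit_of g n1 p1 = orbit_of g n2 p2) \<and>
       (\<forall>c1 c2. tangency_critical I g c1 \<and> tangency_critical I g c2 \<longrightarrow> c1 = c2) \<and>
       (\<forall>n p. nonhyperbolic_periodic I g n p \<longrightarrow>
            generic_saddle_node I J f l0 n p \<or> generic_period_doubling I J f l0 n p) \<and>
       (\<forall>c. tangency_critical I g c \<longrightarrow> generic_tangency I J f l0 c))"

definition chain_recurrent :: "real set \<Rightarrow> (real \<Rightarrow> real) \<Rightarrow> real \<Rightarrow> bool" where
  "chain_recurrent I g x \<longleftrightarrow> x \<in> I \<and>
     (\<forall>\<epsilon>>0. \<exists>N>0. \<exists>z::nat \<Rightarrow> real. z 0 = x \<and> z N = x \<and> (\<forall>n\<le>N. z n \<in> I) \<and>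
        (\<forall>n\<in>{1..N}. \<bar>g (z (n - 1)) - z n\<bar> < \<epsilon>))"

definition chain_explosion_point ::
  "real set \<Rightarrow> real set \<Rightarrow> (real \<Rightarrow> real \<Rightarrow> real) \<Rightarrow> real \<Rightarrow> real \<Rightarrow> bool" where
  "chain_explosion_point I J f x l0 \<longleftrightarrow>
     chain_recurrent I (\<lambda>u. f u l0) x \<and>
     (\<exists>U \<delta> s. open U \<and> x \<in> U \<and> \<delta> > 0 \<and> s \<in> {-1, 1::real} \<and>
        (\<forall>l. 0 < s * (l - l0) \<and> s * (l - l0) < \<delta> \<longrightarrow>
             l \<in> J \<and> (\<forall>w\<in>U. \<not> chain_recurrent I (\<lambda>u. f u l) w)))"

end

theory Submission
  imports Defs
begin

(* Periodic points are chain recurrent, so it suffices to find, for every l near l0, a periodic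
   point of f_l arbitrarily close to y. Since f_0'(x0) < 0, f_0 moves points near x0 to the
   other side of x0. If y = x0 this already makes f_0(x) - x change sign near y. Otherwise the
   backward homoclinic orbit z_{-k} -> x0 visits both sides of x0, so by the intermediate value
   theorem some v next to y, on the side of x0, satisfies f_0^k(v) = y while f_0^k(y) = x0: again
   f_0^k(x) - x changes sign near y. Such a sign change persists for l near l0 and yields a
   fixed point of f_l^k near y. Only continuity of the family, (H2), the homoclinic orbit and
   f_0'(x0) < 0 are used. *)

lemma funpow_backward_orbit:
  assumes "\<And>k. g (z (Suc k)) = z k"
  shows "(g ^^ j) (z (k + j)) = z k"
  by (induction j arbitrary: k) (simp_all add: funpow_swap1 assms)

lemma funpow_fixed_point: "g x = x \<Longrightarrow> (g ^^ n) x = x"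
  by (induction n) auto

lemma funpow_maps_into:
  assumes "g ` I \<subseteq> I" "x \<in> I"
  shows "(g ^^ n) x \<in> I"
  using assms by (induction n) auto

lemma continuous_on_funpow:
  assumes "continuous_on I g" "g ` I \<subseteq> I"
  shows "continuous_on I (g ^^ n)"
proof (induction n)
  case (Suc n)
  with assms show ?case
    by (auto intro: continuous_on_compose2[OF assms(1)] funpow_maps_into)
qed simp

lemma continuous_on_funpow_family:
  assumes cont: "continuous_on (I \<times> J) (\<lambda>(x, l). f x l)"
    and maps: "\<forall>x\<in>I. \<forall>l\<in>J. f x l \<in> I"
  shows "continuous_on (I \<times> J) (\<lambda>(x, l). ((\<lambda>u. f u l) ^^ n) x)"
proof (induction n)
  case (Suc n)
  have "continuous_on (I \<times> J) (\<lambda>p. (((\<lambda>u. f u (snd p)) ^^ n) (fst p), snd p))"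
    using Suc.IH by (intro continuous_intros) (simp add: split_def)
  moreover have "(\<lambda>p. (((\<lambda>u. f u (snd p)) ^^ n) (fst p), snd p)) ` (I \<times> J) \<subseteq> I \<times> J"
    using maps by (auto intro: funpow_maps_into)
  ultimately have "continuous_on (I \<times> J) (\<lambda>p. (\<lambda>(x, l). f x l) (((\<lambda>u. f u (snd p)) ^^ n) (fst p), snd p))"
    by (rule continuous_on_compose2[OF cont])
  then show ?case by (simp add: split_def)
qed (simp add: continuous_on_fst split_def)

lemma continuous_on_slices:
  assumes "continuous_on (I \<times> J) (\<lambda>(x, l). F x l)"
  shows "l \<in> J \<Longrightarrow> continuous_on I (\<lambda>x. F x l)" and "x \<in> I \<Longrightarrow> continuous_on J (F x)"
proof -
  show "continuous_on I (\<lambda>x. F x l)" if "l \<in> J"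
    using continuous_on_compose2[OF assms continuous_on_Pair[OF continuous_on_id continuous_on_const]] that
    by auto
  show "continuous_on J (F x)" if "x \<in> I"
    using continuous_on_compose2[OF assms continuous_on_Pair[OF continuous_on_const continuous_on_id]] that
    by auto
qed

lemma C1_family_of_C2_maps_continuous:
  assumes "C1_family_of_C2_maps I J f"
  shows "continuous_on (I \<times> J) (\<lambda>(x, l). f x l)"
proof -
  obtain fx fl where "\<forall>x\<in>I. \<forall>l\<in>J. ((\<lambda>(u, v). f u v) has_derivative (\<lambda>(h, k). fx x l * h + fl x l * k))
                           (at (x, l) within I \<times> J)"
    using assms unfolding C1_family_of_C2_maps_def by blast
  then show ?thesis
    unfolding continuous_on_eq_continuous_within using has_derivative_continuous by fastforce
qed

lemma nowhere_constant_funpow: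
  assumes "continuous_on I g" "g ` I \<subseteq> I" "nowhere_constant I g"
  shows "nowhere_constant I (g ^^ n)"
  unfolding nowhere_constant_def
proof (induction n)
  case 0
  show ?case
  proof (intro allI impI notI)
    fix a b :: real
    assume "a < b \<and> {a..b} \<subseteq> I" "\<exists>c. \<forall>x\<in>{a..b}. (g ^^ 0) x = c"
    then obtain c where "a < b" "\<forall>x\<in>{a..b}. x = c"
      by auto
    then have "a = c" "b = c"
      by auto
    with \<open>a < b\<close> show False
      by simp
  qed
next
  case (Suc n)
  show ?case
  proof (intro allI impI notI)
    fix a b
    assume ab: "a < b \<and> {a..b} \<subseteq> I" and "\<exists>c. \<forall>x\<in>{a..b}. (g ^^ Suc n) x = c"
    then obtain c where c: "\<forall>x\<in>{a..b}. (g ^^ n) (g x) = c"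
      by (auto simp: funpow_swap1)
    from assms(3) ab obtain x1 x2 where x: "x1 \<in> {a..b}" "x2 \<in> {a..b}" "g x1 < g x2"
      unfolding nowhere_constant_def by (metis linorder_neqE_linordered_idom)
    have "connected (g ` {a..b})"
      using assms(1) ab by (intro connected_continuous_image) (auto intro: continuous_on_subset)
    then have image: "{g x1..g x2} \<subseteq> g ` {a..b}"
      using x by (intro connected_contains_Icc) auto
    then have "{g x1..g x2} \<subseteq> I"
      using ab assms(2) by blast
    moreover have "\<forall>u\<in>{g x1..g x2}. (g ^^ n) u = c"
      using image c by blast
    ultimately show False
      using Suc.IH x(3) by blast
  qed
qed

lemma nowhere_constant_moves_towards:
  fixes F :: "real \<Rightarrow> real"
  assumes "is_interval I" "nowhere_constant I F" "y \<in> I" "x0 \<in> I" "y \<noteq> x0" "e > 0"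
  shows "\<exists>p\<in>I. 0 < (p - y) * (x0 - y) \<and> \<bar>p - y\<bar> < e \<and> F p \<noteq> F y"
proof -
  define m where "m = min e \<bar>x0 - y\<bar> / 2"
  have m: "0 < m" "m < e" "m < \<bar>x0 - y\<bar>"
    using assms(5,6) by (auto simp: m_def min_def)
  have segment: "closed_segment y x0 \<subseteq> I"
    using assms(1,3,4) by (simp add: closed_segment_subset is_interval_convex_1)
  have nonconstant: "\<exists>p\<in>{a..b}. F p \<noteq> F y" if "a < b" "{a..b} \<subseteq> I" for a b
    using assms(2) that unfolding nowhere_constant_def by blast
  consider "y < x0" | "x0 < y"
    using assms(5) by linarith
  then show ?thesis
  proof cases
    case 1
    with segment m have "{y..y + m} \<subseteq> I"
      by (auto simp: closed_segment_eq_real_ivl)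
    then obtain p where p: "p \<in> {y..y + m}" "F p \<noteq> F y"
      using nonconstant[of y "y + m"] m by auto
    then have "y < p"
      by (cases "p = y") auto
    with p 1 m \<open>{y..y + m} \<subseteq> I\<close> show ?thesis
      by (intro bexI[of _ p] conjI mult_pos_pos) auto
  next
    case 2
    with segment m have "{y - m..y} \<subseteq> I"
      by (auto simp: closed_segment_eq_real_ivl)
    then obtain p where p: "p \<in> {y - m..y}" "F p \<noteq> F y"
      using nonconstant[of "y - m" y] m by auto
    then have "p < y"
      by (cases "p = y") auto
    with p 2 m \<open>{y - m..y} \<subseteq> I\<close> show ?thesis
      by (intro bexI[of _ p] conjI mult_neg_neg) auto
  qed
qed

definition flips_sides_near :: "real set \<Rightarrow> (real \<Rightarrow> real) \<Rightarrow> real \<Rightarrow> real \<Rightarrow> bool" where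
  "flips_sides_near I g x0 r \<longleftrightarrow>
     (\<forall>x\<in>I. x \<noteq> x0 \<and> \<bar>x - x0\<bar> < r \<longrightarrow> (g x - x0) * (x - x0) < 0)"

lemma negative_derivative_flips_sides:
  fixes g :: "real \<Rightarrow> real"
  assumes "(g has_real_derivative d) (at x0 within I)" "d < 0" "g x0 = x0"
  shows "\<exists>r>0. flips_sides_near I g x0 r"
proof -
  have "((\<lambda>x. (g x - g x0) / (x - x0)) \<longlongrightarrow> d) (at x0 within I)"
    using assms(1) by (simp add: has_field_derivative_iff)
  then have "\<forall>\<^sub>F x in at x0 within I. (g x - x0) / (x - x0) < 0"
    using assms(2,3) by (auto dest: order_tendstoD(2))
  then obtain r where "r > 0" "\<forall>x\<in>I. x \<noteq> x0 \<and> dist x x0 < r \<longrightarrow> (g x - x0) / (x - x0) < 0"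
    unfolding eventually_at by blast
  then show ?thesis
    unfolding flips_sides_near_def
    by (intro exI[of _ r]) (auto simp: dist_real_def divide_less_0_iff mult_less_0_iff)
qed

lemma backward_orbit_enters_between:
  fixes g :: "real \<Rightarrow> real"
  assumes flip: "flips_sides_near I g x0 r" "r > 0"
    and orbit: "\<forall>k. z k \<in> I" "\<forall>k. g (z (Suc k)) = z k" "z \<longlonglongrightarrow> x0"
    and avoid: "\<forall>k\<ge>K. z k \<noteq> x0" and "q \<noteq> x0"
  shows "\<exists>k\<ge>K. 0 < (z k - x0) * (q - x0) \<and> \<bar>z k - x0\<bar> < \<bar>q - x0\<bar>"
proof -
  have "0 < min r \<bar>q - x0\<bar>"
    using flip(2) \<open>q \<noteq> x0\<close> by simp
  then obtain k1 where k1: "\<forall>k\<ge>k1. \<bar>z k - x0\<bar> < min r \<bar>q - x0\<bar>"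
    using LIMSEQ_D[OF orbit(3)] by (metis real_norm_def)
  define k where "k = max k1 K"
  have near: "\<bar>z k - x0\<bar> < \<bar>q - x0\<bar>" "\<bar>z (Suc k) - x0\<bar> < \<bar>q - x0\<bar>"
    using k1 by (auto simp: k_def)
  have "(g (z (Suc k)) - x0) * (z (Suc k) - x0) < 0"
    using flip(1) orbit(1) avoid k1 by (simp add: flips_sides_near_def k_def)
  then have "(z k - x0) * (z (Suc k) - x0) < 0"
    using orbit(2) by simp
  then have "0 < (z k - x0) * (q - x0) \<or> 0 < (z (Suc k) - x0) * (q - x0)"
    using \<open>q \<noteq> x0\<close> by (auto simp: mult_less_0_iff zero_less_mult_iff)
  moreover have "K \<le> k" "K \<le> Suc k"
    by (auto simp: k_def)
  ultimately show ?thesis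
    using near by blast
qed

lemma homoclinic_preimage_near:
  fixes g :: "real \<Rightarrow> real"
  assumes I: "is_interval I" and g: "continuous_on I g" "g ` I \<subseteq> I" "nowhere_constant I g"
    and fixed: "g x0 = x0"
    and flip: "flips_sides_near I g x0 r" "r > 0"
    and orbit: "z 0 = x0" "z K = y" "\<forall>k. z k \<in> I" "\<forall>k. g (z (Suc k)) = z k" "z \<longlonglongrightarrow> x0"
    and "y \<noteq> x0" "e > 0"
  shows "\<exists>k>0. \<exists>v\<in>I. \<bar>v - y\<bar> < e \<and> 0 < (v - y) * (x0 - y) \<and> (g ^^ k) v = y \<and> (g ^^ k) y = x0"
proof -
  have shift: "(g ^^ j) (z (k + j)) = z k" for j k
    using funpow_backward_orbit orbit(4) by blast
  have gKy: "(g ^^ K) y = x0"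
    using shift[of K 0] orbit(1,2) by simp
  have avoid: "\<forall>k\<ge>K. z k \<noteq> x0"
  proof (intro allI impI notI)
    fix k assume "K \<le> k" "z k = x0"
    then have "y = (g ^^ (k - K)) x0"
      using shift[of "k - K" K] orbit(2) by simp
    with \<open>y \<noteq> x0\<close> fixed show False
      by (simp add: funpow_fixed_point)
  qed
  have "x0 \<in> I" "y \<in> I"
    using orbit by metis+
  obtain p where p: "p \<in> I" "0 < (p - y) * (x0 - y)" "\<bar>p - y\<bar> < e" "(g ^^ K) p \<noteq> x0"
    using nowhere_constant_moves_towards[OF I nowhere_constant_funpow[OF g] \<open>y \<in> I\<close> \<open>x0 \<in> I\<close>
        \<open>y \<noteq> x0\<close> \<open>e > 0\<close>] gKy by metis
  obtain k where k: "K \<le> k" "0 < (z k - x0) * ((g ^^ K) p - x0)" "\<bar>z k - x0\<bar> < \<bar>(g ^^ K) p - x0\<bar>"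
    using backward_orbit_enters_between[OF flip orbit(3-5) avoid p(4)] by blast
  have segment: "closed_segment y p \<subseteq> I"
    using I p(1) \<open>y \<in> I\<close> by (simp add: closed_segment_subset is_interval_convex_1)
  have "z k \<in> closed_segment ((g ^^ K) y) ((g ^^ K) p)"
    using k(2,3) gKy by (auto simp: closed_segment_eq_real_ivl zero_less_mult_iff)
  moreover have "continuous_on (closed_segment y p) (g ^^ K)"
    using continuous_on_funpow[OF g(1,2)] segment by (rule continuous_on_subset)
  ultimately obtain v where v: "v \<in> closed_segment y p" "(g ^^ K) v = z k"
    using IVT'_closed_segment_real by blast
  have "v \<noteq> y"
    using v(2) gKy avoid k(1) by auto
  have "(g ^^ k) v = (g ^^ (k - K)) ((g ^^ K) v)"
    using k(1) by (metis funpow_add le_add_diff_inverse2 o_apply)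
  also have "\<dots> = y"
    using v(2) shift[of "k - K" K] orbit(2) k(1) by simp
  finally have "(g ^^ k) v = y" .
  moreover have "(g ^^ k) y = x0"
    using k(1) gKy fixed by (metis funpow_add funpow_fixed_point le_add_diff_inverse2 o_apply)
  moreover have "0 < k"
    using k(1) orbit(1,2) \<open>y \<noteq> x0\<close> by (cases K) auto
  moreover have "\<bar>v - y\<bar> < e" "0 < (v - y) * (x0 - y)"
    using v(1) \<open>v \<noteq> y\<close> p(2,3) by (auto simp: closed_segment_eq_real_ivl zero_less_mult_iff split: if_splits)
  ultimately show ?thesis
    using v(1) segment by blast
qed

definition displacement_changes_sign_near :: "real set \<Rightarrow> (real \<Rightarrow> real) \<Rightarrow> real \<Rightarrow> real \<Rightarrow> bool" where
  "displacement_changes_sign_near I F y e \<longleftrightarrow>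
     (\<exists>a\<in>I. \<exists>b\<in>I. \<bar>a - y\<bar> < e \<and> \<bar>b - y\<bar> < e \<and> F a < a \<and> b < F b)"

lemma displacement_changes_sign_nearI:
  assumes "a \<in> I" "b \<in> I" "\<bar>a - y\<bar> < e" "\<bar>b - y\<bar> < e" "(F a - a) * (F b - b) < 0"
  shows "displacement_changes_sign_near I F y e"
  using assms unfolding displacement_changes_sign_near_def mult_less_0_iff by force

lemma flips_sides_near_displacement_changes_sign:
  fixes g :: "real \<Rightarrow> real"
  assumes "x0 islimpt I" "continuous_on I g" "g ` I \<subseteq> I" "x0 \<in> I" "g x0 = x0"
    and flip: "flips_sides_near I g x0 r" "r > 0"
    and "e > 0"
  shows "displacement_changes_sign_near I g x0 e"
proof -
  obtain \<rho> where "\<rho> > 0" and \<rho>: "\<forall>x\<in>I. dist x x0 < \<rho> \<longrightarrow> dist (g x) x0 < min e r"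
    using assms(2,4,5) \<open>r > 0\<close> \<open>e > 0\<close> unfolding continuous_on_iff by (metis min_less_iff_conj)
  obtain x where x: "x \<in> I" "x \<noteq> x0" "dist x x0 < min \<rho> (min e r)"
    using assms(1) \<open>\<rho> > 0\<close> \<open>r > 0\<close> \<open>e > 0\<close> unfolding islimpt_approachable by (metis min_less_iff_conj)
  define w where "w = g x"
  have "w \<in> I" "\<bar>w - x0\<bar> < min e r"
    using x \<rho> assms(3) by (auto simp: w_def dist_real_def)
  have xw: "(w - x0) * (x - x0) < 0"
    using flip(1) x by (auto simp: flips_sides_near_def w_def dist_real_def)
  then have "w \<noteq> x0" by auto
  then have "(g w - x0) * (w - x0) < 0"
    using flip(1) \<open>w \<in> I\<close> \<open>\<bar>w - x0\<bar> < min e r\<close> by (auto simp: flips_sides_near_def)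
  with xw have "(g x - x) * (g w - w) < 0"
    by (auto simp: w_def mult_less_0_iff)
  then show ?thesis
    using x \<open>w \<in> I\<close> \<open>\<bar>w - x0\<bar> < min e r\<close>
    by (intro displacement_changes_sign_nearI[of x I w]) (auto simp: dist_real_def)
qed

lemma homoclinic_displacement_changes_sign:
  fixes g :: "real \<Rightarrow> real"
  assumes I: "is_interval I" "interior I \<noteq> {}"
    and g: "continuous_on I g" "g ` I \<subseteq> I" "nowhere_constant I g"
    and deriv: "(g has_real_derivative d) (at x0 within I)" "d < 0" and fixed: "g x0 = x0"
    and orbit: "z 0 = x0" "z K = y" "\<forall>k. z k \<in> I" "\<forall>k. g (z (Suc k)) = z k" "z \<longlonglongrightarrow> x0"
    and "e > 0"
  shows "\<exists>n>0. displacement_changes_sign_near I (g ^^ n) y e"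
proof -
  obtain r where flip: "flips_sides_near I g x0 r" "r > 0"
    using negative_derivative_flips_sides[OF deriv fixed] by blast
  have "x0 \<in> I"
    using orbit by metis
  show ?thesis
  proof (cases "y = x0")
    case True
    have "I \<noteq> {a}" for a
      using I(2) by auto
    then have "x0 islimpt I"
      using connected_imp_perfect is_interval_connected I(1) \<open>x0 \<in> I\<close> by blast
    then have "displacement_changes_sign_near I (g ^^ 1) y e"
      using flips_sides_near_displacement_changes_sign g(1,2) \<open>x0 \<in> I\<close> fixed flip \<open>e > 0\<close> True
      by simp
    then show ?thesis by blast
  next
    case False
    then obtain k v where "k > 0" "v \<in> I" "\<bar>v - y\<bar> < e" "0 < (v - y) * (x0 - y)"
        "(g ^^ k) v = y" "(g ^^ k) y = x0"
      using homoclinic_preimage_near[OF I(1) g fixed flip orbit] \<open>e > 0\<close> by blast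
    moreover have "y \<in> I"
      using orbit by metis
    ultimately show ?thesis
      using \<open>e > 0\<close>
      by (intro exI[of _ k] conjI displacement_changes_sign_nearI[of v I y])
         (auto simp: mult_less_0_iff zero_less_mult_iff)
  qed
qed

lemma displacement_sign_change_persists:
  assumes cont: "\<And>x. x \<in> I \<Longrightarrow> continuous_on J (\<lambda>l. F l x)" and "l0 \<in> J"
    and "displacement_changes_sign_near I (F l0) y e"
  shows "\<forall>\<^sub>F l in at l0 within J. displacement_changes_sign_near I (F l) y e"
proof -
  obtain a b where ab: "a \<in> I" "b \<in> I" "\<bar>a - y\<bar> < e" "\<bar>b - y\<bar> < e" "F l0 a < a" "b < F l0 b"
    using assms(3) by (auto simp: displacement_changes_sign_near_def)
  have "((\<lambda>l. F l x) \<longlongrightarrow> F l0 x) (at l0 within J)" if "x \<in> I" for x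
    using cont[OF that] \<open>l0 \<in> J\<close> by (simp add: continuous_on_def)
  then have "\<forall>\<^sub>F l in at l0 within J. F l a < a" "\<forall>\<^sub>F l in at l0 within J. b < F l b"
    using ab by (auto dest: order_tendstoD)
  then show ?thesis
    by eventually_elim (use ab in \<open>auto simp: displacement_changes_sign_near_def\<close>)
qed

lemma displacement_sign_change_fixed_point:
  fixes F :: "real \<Rightarrow> real"
  assumes "is_interval I" "continuous_on I F" "displacement_changes_sign_near I F y e"
  shows "\<exists>p\<in>I. \<bar>p - y\<bar> < e \<and> F p = p"
proof -
  obtain a b where ab: "a \<in> ball y e" "b \<in> ball y e" "a \<in> I" "b \<in> I" "F a < a" "b < F b"
    using assms(3) by (auto simp: displacement_changes_sign_near_def dist_real_def abs_minus_commute)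
  have seg: "closed_segment a b \<subseteq> I \<inter> ball y e"
    using ab assms(1) by (intro closed_segment_subset convex_Int) (auto simp: is_interval_convex_1)
  have "0 \<in> closed_segment (F a - a) (F b - b)"
    using ab by (simp add: closed_segment_eq_real_ivl)
  moreover have "continuous_on (closed_segment a b) (\<lambda>x. F x - x)"
    using seg by (intro continuous_intros continuous_on_subset[OF assms(2)]) auto
  ultimately obtain p where "p \<in> closed_segment a b" "F p - p = 0"
    using IVT'_closed_segment_real[of 0 "\<lambda>x. F x - x"] by auto
  with seg show ?thesis by (force simp: dist_real_def abs_minus_commute)
qed

lemma periodic_point_chain_recurrent:
  assumes "g ` I \<subseteq> I" "x \<in> I" "n > 0" "(g ^^ n) x = x"
  shows "chain_recurrent I g x"
  unfolding chain_recurrent_def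
proof (intro conjI allI impI)
  fix \<epsilon> :: real
  assume "\<epsilon> > 0"
  have "\<bar>g ((g ^^ (j - 1)) x) - (g ^^ j) x\<bar> < \<epsilon>" if "j \<in> {1..n}" for j
    using that \<open>\<epsilon> > 0\<close> by (cases j) auto
  then show "\<exists>N>0. \<exists>z::nat \<Rightarrow> real. z 0 = x \<and> z N = x \<and> (\<forall>j\<le>N. z j \<in> I) \<and>
      (\<forall>j\<in>{1..N}. \<bar>g (z (j - 1)) - z j\<bar> < \<epsilon>)"
    using assms by (intro exI[of _ n] conjI exI[of _ "\<lambda>j. (g ^^ j) x"]) (auto intro: funpow_maps_into)
qed (fact assms(2))

lemma periodic_points_accumulating_imp_not_chain_explosion:
  assumes maps: "\<forall>x\<in>I. \<forall>l\<in>J. f x l \<in> I"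
    and periodic: "\<And>e. e > 0 \<Longrightarrow> \<exists>n>0. \<forall>\<^sub>F l in at l0 within J.
                     \<exists>p\<in>I. \<bar>p - y\<bar> < e \<and> ((\<lambda>u. f u l) ^^ n) p = p"
  shows "\<not> chain_explosion_point I J f y l0"
proof
  assume "chain_explosion_point I J f y l0"
  then obtain U \<delta> s where U: "open U" "y \<in> U" and "\<delta> > 0" "s \<in> {-1, 1}"
    and no_recurrence: "\<forall>l. 0 < s * (l - l0) \<and> s * (l - l0) < \<delta> \<longrightarrow>
                          l \<in> J \<and> (\<forall>w\<in>U. \<not> chain_recurrent I (\<lambda>u. f u l) w)"
    unfolding chain_explosion_point_def by blast
  obtain e where "e > 0" "ball y e \<subseteq> U"
    using U open_contains_ball by blast
  then obtain n \<eta> where "n > 0" "\<eta> > 0" and fixed_points: "\<forall>l\<in>J. l \<noteq> l0 \<and> dist l l0 < \<eta> \<longrightarrow>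
      (\<exists>p\<in>I. \<bar>p - y\<bar> < e \<and> ((\<lambda>u. f u l) ^^ n) p = p)"
    using periodic unfolding eventually_at by meson
  define l where "l = l0 + s * min \<delta> \<eta> / 2"
  have "0 < s * (l - l0)" "s * (l - l0) < \<delta>" "l \<noteq> l0" "dist l l0 < \<eta>"
    using \<open>s \<in> {-1, 1}\<close> \<open>\<delta> > 0\<close> \<open>\<eta> > 0\<close> by (auto simp: l_def dist_real_def)
  with no_recurrence fixed_points obtain p where "l \<in> J" "\<forall>w\<in>U. \<not> chain_recurrent I (\<lambda>u. f u l) w"
    and "p \<in> I" "\<bar>p - y\<bar> < e" "((\<lambda>u. f u l) ^^ n) p = p"
    by blast
  moreover have "(\<lambda>u. f u l) ` I \<subseteq> I"
    using maps \<open>l \<in> J\<close> by auto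
  moreover have "p \<in> U"
    using \<open>\<bar>p - y\<bar> < e\<close> \<open>ball y e \<subseteq> U\<close> by (auto simp: dist_real_def)
  ultimately show False
    using periodic_point_chain_recurrent \<open>n > 0\<close> by blast
qed

theorem mainTheorem3:
  fixes I J :: "real set" and f :: "real \<Rightarrow> real \<Rightarrow> real" and l0 :: real
    and xs :: "real \<Rightarrow> real" and y :: real and z :: "nat \<Rightarrow> real" and d :: real
  assumes intI: "is_interval I" "interior I \<noteq> {}"
    and intJ: "is_interval J" "interior J \<noteq> {}"
    and maps: "\<forall>x\<in>I. \<forall>l\<in>J. f x l \<in> I"
    and l0J: "l0 \<in> J"
    and H1: "C1_family_of_C2_maps I J f"
    and H2: "nowhere_constant I (\<lambda>x. f x l0)"
    and H3: "H3_condition I J f l0"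
    and H4_fix: "\<forall>l\<in>J. repelling_fixed I (\<lambda>x. f x l) (xs l)"
    and H4_hom: "homoclinic_point I (\<lambda>x. f x l0) (xs l0) y"
    and H5_orb: "homoclinic_orbit I (\<lambda>x. f x l0) (xs l0) y z"
    and H5_crit: "\<exists>!c. c \<in> range z \<and> critical_point I (\<lambda>x. f x l0) c"
    and neg: "((\<lambda>x. f x l0) has_real_derivative d) (at (xs l0) within I)" "d < 0"
  shows "\<not> chain_explosion_point I J f y l0"
proof (rule periodic_points_accumulating_imp_not_chain_explosion[OF maps])
  fix e :: real
  assume "e > 0"
  have cont: "continuous_on (I \<times> J) (\<lambda>(x, l). f x l)"
    by (rule C1_family_of_C2_maps_continuous[OF H1])
  have maps_l: "(\<lambda>u. f u l) ` I \<subseteq> I" if "l \<in> J" for l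
    using maps that by auto
  have "f (xs l0) l0 = xs l0"
    using H4_fix l0J by (simp add: repelling_fixed_def)
  moreover obtain K where "z 0 = xs l0" "z K = y" "\<forall>k. z k \<in> I"
    "\<forall>k. f (z (Suc k)) l0 = z k" "z \<longlonglongrightarrow> xs l0"
    using H5_orb unfolding homoclinic_orbit_def by blast
  ultimately obtain n where "n > 0" "displacement_changes_sign_near I ((\<lambda>u. f u l0) ^^ n) y e"
    using homoclinic_displacement_changes_sign[OF intI continuous_on_slices(1)[OF cont l0J]
        maps_l[OF l0J] H2 neg] \<open>e > 0\<close> by blast
  then have "\<forall>\<^sub>F l in at l0 within J. displacement_changes_sign_near I ((\<lambda>u. f u l) ^^ n) y e"
    using continuous_on_slices(2)[OF continuous_on_funpow_family[OF cont maps, of n]] l0J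
    by (intro displacement_sign_change_persists[of I J "\<lambda>l. (\<lambda>u. f u l) ^^ n"]) auto
  moreover have "\<forall>\<^sub>F l in at l0 within J. l \<in> J"
    by (simp add: eventually_at_filter)
  ultimately have "\<forall>\<^sub>F l in at l0 within J. \<exists>p\<in>I. \<bar>p - y\<bar> < e \<and> ((\<lambda>u. f u l) ^^ n) p = p"
    by eventually_elim (metis displacement_sign_change_fixed_point intI(1) continuous_on_funpow
        continuous_on_slices(1)[OF cont] maps_l)
  with \<open>n > 0\<close> show "\<exists>n>0. \<forall>\<^sub>F l in at l0 within J.
      \<exists>p\<in>I. \<bar>p - y\<bar> < e \<and> ((\<lambda>u. f u l) ^^ n) p = p"
    by blast
qed

end
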